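(* Let $f$ be a non-constant entire function. Then $$Z(f')=\bigcup_{\phi\in{\rm Aut}(f)-\{{\rm id}\}}\{w\in\mathbb{C}\,|\,\phi(w)=w\}=:{\rm Fix}({\rm Aut}(f)),$$ where $Z(f')$ is the zero set of $f'$.
   Context: An automorphic function of $f$ is a (generally multivalued) analytic function $\phi$, or a branch of one, satisfying $f(\phi(z))=f(z)$, i.e. a branch of $f^{-1}\circ f$; ${\rm Aut}(f)$ is the group (under composition) of all of them, with identity ${\rm id}(z)=z$. A point $w$ is a fixed point of $\phi\in{\rm Aut}(f)-\{{\rm id}\}$ if a branch of $f^{-1}\circ f$ different from the identity branch takes the value $w$ at $w$ (as its value or limit value at $w$). *)

theory Defs
  imports "HOL-Complex_Analysis.Complex_Analysis"
begin

text \<open>A branch of the (multivalued) automorphic function f^{-1} o f: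
  an analytic function phi on a nonempty open connected domain D with f (phi z) = f z on D.\<close>
definition aut_branch :: "(complex \<Rightarrow> complex) \<Rightarrow> (complex \<Rightarrow> complex) \<Rightarrow> complex set \<Rightarrow> bool" where
  "aut_branch f \<phi> D \<longleftrightarrow> open D \<and> connected D \<and> D \<noteq> {} \<and> \<phi> holomorphic_on D
     \<and> (\<forall>z\<in>D. f (\<phi> z) = f z)"

text \<open>Fix(Aut(f)): points w such that some branch different from the identity branch
  takes the value w at w, as its value or limit value (w in the closure of the domain).\<close>
definition Fix_Aut :: "(complex \<Rightarrow> complex) \<Rightarrow> complex set" where
  "Fix_Aut f = {w. \<exists>\<phi> D. aut_branch f \<phi> D \<and> (\<exists>z\<in>D. \<phi> z \<noteq> z)
       \<and> w \<in> closure D \<and> (\<phi> \<longlongrightarrow> w) (at w within D)}"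

end

theory Submission
  imports Defs
begin

text \<open>At a regular point w of f, f is injective near w, so f (\<phi> z) = f z forces \<phi> z = z
  whenever both z and \<phi> z are close to w; by analytic continuation \<phi> is then the identity
  branch. At a critical point w with f(z) = f(w) + h(z)^k for a local coordinate h and k \<ge> 2,
  the branch h^{-1}(\<zeta> h(z)) with \<zeta> a nontrivial k-th root of unity fixes w and is not the identity.\<close>

lemma holomorphic_eq_if_eventually_eq_within:
  assumes "f holomorphic_on D" "g holomorphic_on D" "open D" "connected D"
    and "w islimpt D" and "eventually (\<lambda>z. f z = g z) (at w within D)"
    and "z \<in> D"
  shows "f z = g z"
proof -
  obtain d where d: "d > 0" "\<And>x. x \<in> D \<Longrightarrow> x \<noteq> w \<Longrightarrow> dist x w < d \<Longrightarrow> f x = g x"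
    using assms(6) unfolding eventually_at by blast
  obtain x0 where "x0 \<in> D" "x0 \<noteq> w" "dist x0 w < d"
    using assms(5) d(1) islimpt_approachable by blast
  then have "D \<inter> ball w d - {w} \<noteq> {}"
    by (auto simp: dist_commute)
  moreover have "open (D \<inter> ball w d - {w})"
    using assms(3) by (intro open_Diff open_Int) auto
  moreover have "\<And>x. x \<in> D \<inter> ball w d - {w} \<Longrightarrow> f x = g x"
    using d(2) by (auto simp: dist_commute)
  ultimately show ?thesis
    using analytic_continuation_open[of _ D f g] assms by blast
qed

lemma aut_branch_eventually_id_at_regular_point:
  assumes "f holomorphic_on S" "open S" "w \<in> S" "deriv f w \<noteq> 0"
    and "aut_branch f \<phi> D" and "(\<phi> \<longlongrightarrow> w) (at w within D)"
  shows "eventually (\<lambda>z. \<phi> z = z) (at w within D)"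
proof -
  obtain r where r: "r > 0" "inj_on f (ball w r)"
    using has_complex_derivative_locally_injective[OF assms(1,3,2,4)] by blast
  have "eventually (\<lambda>z. \<phi> z \<in> ball w r) (at w within D)"
    using assms(6) r(1) unfolding tendsto_def by (metis open_ball centre_in_ball)
  moreover have "eventually (\<lambda>z. z \<in> ball w r \<and> z \<in> D) (at w within D)"
    using r(1) by (auto simp: eventually_at dist_commute intro!: exI[of _ r])
  ultimately show ?thesis
    by eventually_elim (use assms(5) r(2) in \<open>auto simp: aut_branch_def inj_on_def\<close>)
qed

lemma deriv_eq_0_if_in_Fix_Aut:
  assumes "f holomorphic_on S" "open S" "w \<in> S" "w \<in> Fix_Aut f"
  shows "deriv f w = 0"
proof (rule ccontr)
  assume "deriv f w \<noteq> 0"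
  obtain \<phi> D where br: "aut_branch f \<phi> D" and not_id: "\<exists>z\<in>D. \<phi> z \<noteq> z"
    and w_cl: "w \<in> closure D" and lim: "(\<phi> \<longlongrightarrow> w) (at w within D)"
    using assms(4) unfolding Fix_Aut_def by blast
  have D: "open D" "connected D" "\<phi> holomorphic_on D"
    using br unfolding aut_branch_def by auto
  have "w islimpt D"
  proof (cases "w \<in> D")
    case True
    then show ?thesis using D(1) by (simp add: interior_limit_point interior_open)
  next
    case False
    then show ?thesis using w_cl by (simp add: closure_def)
  qed
  moreover have "eventually (\<lambda>z. \<phi> z = id z) (at w within D)"
    using aut_branch_eventually_id_at_regular_point[OF assms(1-3) \<open>deriv f w \<noteq> 0\<close> br lim]
    by simp
  ultimately have "\<forall>z\<in>D. \<phi> z = id z"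
    using D holomorphic_eq_if_eventually_eq_within[of \<phi> D id] by auto
  with not_id show False by simp
qed

lemma higher_deriv_nonzero_if_not_constant:
  assumes "f holomorphic_on S" "open S" "connected S" "w \<in> S" "\<not> f constant_on S"
  obtains n where "0 < n" "(deriv ^^ n) f w \<noteq> 0"
proof (rule ccontr)
  assume "\<not> thesis"
  then have "\<And>n. 0 < n \<Longrightarrow> (deriv ^^ n) f w = 0"
    using that by blast
  then have "\<forall>z\<in>S. f z = f w"
    using holomorphic_fun_eq_const_on_connected[OF assms(1-3)] assms(4) by blast
  with assms(5) show False
    unfolding constant_on_def by blast
qed

lemma critical_point_local_power_form:
  assumes "f holomorphic_on S" "open S" "w \<in> S" "deriv f w = 0"
    and "0 < n" "(deriv ^^ n) f w \<noteq> 0"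
  obtains k U h where "2 \<le> k" "open U" "w \<in> U" "h holomorphic_on U" "inj_on h U" "h w = 0"
    "\<And>z. z \<in> U \<Longrightarrow> f z = f w + h z ^ k"
proof -
  define k where "k = (LEAST n. 0 < n \<and> (deriv ^^ n) f w \<noteq> 0)"
  have k: "0 < k" "(deriv ^^ k) f w \<noteq> 0"
    using LeastI[of "\<lambda>n. 0 < n \<and> (deriv ^^ n) f w \<noteq> 0"] assms(5,6) unfolding k_def by auto
  have below_k: "\<And>i. 0 < i \<Longrightarrow> i < k \<Longrightarrow> (deriv ^^ i) f w = 0"
    unfolding k_def using not_less_Least by blast
  have "k \<noteq> 1"
    using k(2) assms(4) by auto
  with k(1) have "2 \<le> k" by simp
  obtain r g where r: "0 < r" and g: "g holomorphic_on ball w r"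
    and fg: "\<And>z. z \<in> ball w r \<Longrightarrow> f z - f w = ((z - w) * g z) ^ k"
    and g_nz: "\<And>z. z \<in> ball w r \<Longrightarrow> g z \<noteq> 0"
    using holomorphic_factor_order_of_zero_strong[OF assms(1-3) k below_k] by metis
  define h where "h = (\<lambda>z. (z - w) * g z)"
  have h: "h holomorphic_on ball w r"
    unfolding h_def by (intro holomorphic_intros g)
  have "(g has_field_derivative deriv g w) (at w)"
    using g r by (intro holomorphic_derivI[of g "ball w r"]) auto
  then have "(h has_field_derivative (1 * g w + deriv g w * (w - w))) (at w)"
    unfolding h_def by (intro DERIV_mult) (auto intro!: derivative_eq_intros)
  then have "deriv h w \<noteq> 0"
    using g_nz r by (simp add: DERIV_imp_deriv)
  then obtain r' where r': "r' > 0" "ball w r' \<subseteq> ball w r" "inj_on h (ball w r')"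
    using has_complex_derivative_locally_injective[OF h _ open_ball \<open>deriv h w \<noteq> 0\<close>] r by auto
  have "h holomorphic_on ball w r'"
    using holomorphic_on_subset[OF h r'(2)] .
  moreover have "f z = f w + h z ^ k" if "z \<in> ball w r'" for z
  proof -
    have "f z - f w = h z ^ k"
      using fg[of z] r'(2) that unfolding h_def by blast
    then show ?thesis
      by (simp add: algebra_simps)
  qed
  moreover have "w \<in> ball w r'" "h w = 0"
    using r'(1) by (simp_all add: h_def)
  ultimately show thesis
    using that[OF \<open>2 \<le> k\<close> open_ball] r'(3) by blast
qed

lemma nontrivial_root_of_unity:
  assumes "2 \<le> k"
  obtains \<zeta> :: complex where "\<zeta> ^ k = 1" "\<zeta> \<noteq> 1" "norm \<zeta> = 1"
proof
  let ?\<zeta> = "exp (2 * of_real pi * \<i> * of_nat 1 / of_nat k)"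
  show "?\<zeta> ^ k = 1"
    by (rule complex_root_unity) (use assms in linarith)
  show "?\<zeta> \<noteq> 1"
    using complex_root_unity_eq_1[of k 1] assms by auto
  show "norm ?\<zeta> = 1"
    by (simp add: norm_exp_eq_Re)
qed

lemma in_Fix_Aut_if_local_power_form:
  assumes "2 \<le> k" "open U" "w \<in> U" "h holomorphic_on U" "inj_on h U" "h w = 0"
    and f: "\<And>z. z \<in> U \<Longrightarrow> f z = f w + h z ^ k"
  shows "w \<in> Fix_Aut f"
proof -
  obtain hi where hi: "hi holomorphic_on h ` U" and hi_h: "\<And>z. z \<in> U \<Longrightarrow> hi (h z) = z"
    using holomorphic_has_inverse[OF assms(4,2,5)] by metis
  have "open (h ` U)"
    using open_mapping_thm3[OF assms(4,2,5)] .
  then obtain e where e: "e > 0" "ball 0 e \<subseteq> h ` U"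
    using assms(3,6) by (metis image_eqI open_contains_ball)
  have h_hi: "\<And>v. v \<in> ball 0 e \<Longrightarrow> h (hi v) = v \<and> hi v \<in> U"
    using e(2) hi_h by auto
  obtain \<zeta> :: complex where \<zeta>: "\<zeta> ^ k = 1" "\<zeta> \<noteq> 1" "norm \<zeta> = 1"
    using nontrivial_root_of_unity[OF assms(1)] by blast
  define D where "D = U \<inter> h -` ball 0 e"
  define \<phi> where "\<phi> z = hi (\<zeta> * h z)" for z
  have "D = hi ` ball 0 e"
    unfolding D_def using hi_h h_hi by force
  have "connected D"
    unfolding \<open>D = hi ` ball 0 e\<close>
    by (intro connected_continuous_image connected_ball holomorphic_on_imp_continuous_on
          holomorphic_on_subset[OF hi e(2)])
  have "open D"
    unfolding D_def using continuous_open_preimage[OF holomorphic_on_imp_continuous_on[OF assms(4)]]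
      assms(2) by blast
  have w: "w \<in> D"
    unfolding D_def using assms(3,6) e(1) by simp
  have rot: "\<And>z. z \<in> D \<Longrightarrow> \<zeta> * h z \<in> ball 0 e"
    unfolding D_def using \<zeta>(3) by (auto simp: norm_mult)
  have "(\<lambda>z. \<zeta> * h z) holomorphic_on D"
    unfolding D_def by (intro holomorphic_intros holomorphic_on_subset[OF assms(4)]) auto
  moreover have "(\<lambda>z. \<zeta> * h z) ` D \<subseteq> ball 0 e"
    using rot by blast
  ultimately have "\<phi> holomorphic_on D"
    unfolding \<phi>_def
    using holomorphic_on_compose_gen[OF _ holomorphic_on_subset[OF hi e(2)]] by (simp add: o_def)
  moreover have "\<forall>z\<in>D. f (\<phi> z) = f z"
  proof
    fix z assume "z \<in> D"
    then have "f (\<phi> z) = f w + (\<zeta> * h z) ^ k"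
      using f h_hi[OF rot] unfolding \<phi>_def by simp
    also have "\<dots> = f z"
      using f \<open>z \<in> D\<close> \<zeta>(1) by (simp add: D_def power_mult_distrib)
    finally show "f (\<phi> z) = f z" .
  qed
  moreover have "\<exists>z\<in>D. \<phi> z \<noteq> z"
  proof
    define v where "v = complex_of_real (e / 2)"
    have v: "v \<in> ball 0 e" "\<zeta> * v \<in> ball 0 e" "v \<noteq> 0"
      using e(1) \<zeta>(3) by (auto simp: v_def norm_mult)
    show "hi v \<in> D"
      using \<open>D = hi ` ball 0 e\<close> v(1) by blast
    have "h (\<phi> (hi v)) = \<zeta> * v"
      using h_hi[OF v(1)] h_hi[OF v(2)] unfolding \<phi>_def by simp
    then show "\<phi> (hi v) \<noteq> hi v"
      using h_hi[OF v(1)] \<zeta>(2) v(3) by auto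
  qed
  moreover have "(\<phi> \<longlongrightarrow> w) (at w within D)"
  proof -
    have "\<phi> w = w"
      unfolding \<phi>_def using hi_h[OF assms(3)] assms(6) by simp
    then show ?thesis
      using holomorphic_on_imp_continuous_on[OF \<open>\<phi> holomorphic_on D\<close>] w
      by (metis continuous_on_def)
  qed
  ultimately show ?thesis
    unfolding Fix_Aut_def aut_branch_def
    using \<open>open D\<close> \<open>connected D\<close> w closure_subset by blast
qed

theorem theorem4:
  fixes f :: "complex \<Rightarrow> complex"
  assumes "f holomorphic_on UNIV"
    and "\<not> (\<exists>c. \<forall>z. f z = c)"
  shows "{w. deriv f w = 0} = Fix_Aut f"
proof (intro set_eqI iffI)
  fix w
  assume "w \<in> {w. deriv f w = 0}"
  then have "deriv f w = 0"
    by simp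
  have "\<not> f constant_on UNIV"
    using assms(2) unfolding constant_on_def by blast
  then obtain n where "0 < n" "(deriv ^^ n) f w \<noteq> 0"
    using higher_deriv_nonzero_if_not_constant[OF assms(1)] by auto
  with \<open>deriv f w = 0\<close> show "w \<in> Fix_Aut f"
    by (rule critical_point_local_power_form[OF assms(1) open_UNIV UNIV_I])
      (rule in_Fix_Aut_if_local_power_form)
next
  fix w
  assume "w \<in> Fix_Aut f"
  then show "w \<in> {w. deriv f w = 0}"
    using deriv_eq_0_if_in_Fix_Aut[OF assms(1)] by simp
qed

end
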